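(* Let $n\geq 3$ and let $(\mathbb{R}^n,g)$ be the pseudo-Euclidean space with Cartesian coordinates $x=(x_1,\dots,x_n)$ and metric components $g_{ij}=\delta_{ij}\varepsilon_i$, $1\le i,j\le n$, where $\varepsilon_i=\pm1$. Let $\Omega\subseteq\mathbb{R}^n$ be open and let $\varphi>0$, $N>0$ and $\psi$ be smooth functions on $\Omega$. Then $(\Omega,\bar g,N,\psi)$ with $\bar g=g/\varphi^2$ is an electrostatic system if and only if $\varphi,\psi,N$ satisfy: for all $i\neq j$, $$(n-2)N\varphi_{,ij}-\varphi N_{,ij}-\varphi_{,i}N_{,j}-\varphi_{,j}N_{,i}+2\frac{\varphi}{N}\psi_{,i}\psi_{,j}=0;$$ for each $i$, $$\varphi\Big[(n-2)N\varphi_{,ii}-\varphi N_{,ii}-2\varphi_{,i}N_{,i}+2\frac{\varphi}{N}(\psi_{,i})^2\Big]+\varepsilon_i\sum_{k=1}^n\varepsilon_k\Big[\varphi\varphi_{,kk}N+\varphi\varphi_{,k}N_{,k}-(n-1)N(\varphi_{,k})^2-\frac{2}{(n-1)N}\varphi^2(\psi_{,k})^2\Big]=0;$$ $$\sum_{k=1}^n\varepsilon_k\big\{N\varphi\psi_{,kk}-(n-2)N\varphi_{,k}\psi_{,k}-\varphi\psi_{,k}N_{,k}\big\}=0;$$ $$\sum_{k=1}^n\varepsilon_k\big\{\varphi NN_{,kk}-(n-2)N\varphi_{,k}N_{,k}-\widehat C^2\varphi(\psi_{,k})^2\big\}=0,$$ where $\widehat C^2=\frac{2(n-2)}{n-1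}$.
   Context: Notation: $F_{,i}=\partial F/\partial x_i$, $F_{,ij}=\partial^2F/\partial x_i\partial x_j$. Definition (electrostatic system): Let $(M^n,h)$, $n\ge3$, be a semi-Riemannian manifold and $N:M\to\mathbb{R}_{>0}$, $\psi:M\to\mathbb{R}$ smooth. $(M,h,N,\psi)$ is an electrostatic system (static Einstein–Maxwell equations) if $\Delta N=\widehat C^2\frac{|\nabla\psi|^2}{N}$, $\operatorname{div}\big(\frac{\nabla\psi}{N}\big)=0$, and $N\operatorname{Ric}=\nabla^2N-2\frac{\nabla\psi\otimes\nabla\psi}{N}+\frac{2}{(n-1)N}|\nabla\psi|^2h$, where $\widehat C^2=\frac{2(n-2)}{n-1}$ and $\nabla,\Delta,\nabla^2,\operatorname{Ric},\operatorname{div}$ are taken with respect to $h$. *)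

theory Defs
  imports "HOL-Analysis.Analysis"
begin

text \<open>Coordinate calculus on open subsets of R^n, with points in real^'n
(the index type 'n plays the role of {1..n}, n = CARD('n)).\<close>

definition pd :: "'n::finite \<Rightarrow> (real^'n \<Rightarrow> real) \<Rightarrow> real^'n \<Rightarrow> real" where
  "pd i f x = deriv (\<lambda>t. f (x + t *\<^sub>R axis i 1)) 0"

fun pds :: "'n::finite list \<Rightarrow> (real^'n \<Rightarrow> real) \<Rightarrow> real^'n \<Rightarrow> real" where
  "pds [] f = f"
| "pds (i # is) f = pd i (pds is f)"

definition smooth_on :: "(real^'n::finite) set \<Rightarrow> (real^'n \<Rightarrow> real) \<Rightarrow> bool" where
  "smooth_on \<Omega> f \<longleftrightarrow> (\<forall>is. \<forall>x\<in>\<Omega>. pds is f differentiable (at x))"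

definition ginv :: "(real^'n \<Rightarrow> real^'n^'n) \<Rightarrow> real^'n \<Rightarrow> 'n::finite \<Rightarrow> 'n \<Rightarrow> real" where
  "ginv G x i j = matrix_inv (G x) $ i $ j"

definition christoffel :: "(real^'n \<Rightarrow> real^'n^'n) \<Rightarrow> 'n::finite \<Rightarrow> 'n \<Rightarrow> 'n \<Rightarrow> real^'n \<Rightarrow> real" where
  "christoffel G k i j x = (1/2) * (\<Sum>l\<in>UNIV. ginv G x k l *
      (pd i (\<lambda>y. G y $ j $ l) x + pd j (\<lambda>y. G y $ i $ l) x - pd l (\<lambda>y. G y $ i $ j) x))"

definition hess :: "(real^'n \<Rightarrow> real^'n^'n) \<Rightarrow> (real^'n \<Rightarrow> real) \<Rightarrow> 'n::finite \<Rightarrow> 'n \<Rightarrow> real^'n \<Rightarrow> real" where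
  "hess G f i j x = pd i (pd j f) x - (\<Sum>k\<in>UNIV. christoffel G k i j x * pd k f x)"

definition laplacian :: "(real^'n \<Rightarrow> real^'n^'n) \<Rightarrow> (real^'n \<Rightarrow> real) \<Rightarrow> real^'n::finite \<Rightarrow> real" where
  "laplacian G f x = (\<Sum>i\<in>UNIV. \<Sum>j\<in>UNIV. ginv G x i j * hess G f i j x)"

definition gradsq :: "(real^'n \<Rightarrow> real^'n^'n) \<Rightarrow> (real^'n \<Rightarrow> real) \<Rightarrow> real^'n::finite \<Rightarrow> real" where
  "gradsq G f x = (\<Sum>i\<in>UNIV. \<Sum>j\<in>UNIV. ginv G x i j * pd i f x * pd j f x)"

text \<open>Divergence of a vector field given by its contravariant components X i.\<close>
definition divergence :: "(real^'n \<Rightarrow> real^'n^'n) \<Rightarrow> ('n::finite \<Rightarrow> real^'n \<Rightarrow> real) \<Rightarrow> real^'n \<Rightarrow> real" where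
  "divergence G X x = (\<Sum>i\<in>UNIV. pd i (X i) x + (\<Sum>k\<in>UNIV. christoffel G i i k x * X k x))"

definition grad :: "(real^'n \<Rightarrow> real^'n^'n) \<Rightarrow> (real^'n \<Rightarrow> real) \<Rightarrow> 'n::finite \<Rightarrow> real^'n \<Rightarrow> real" where
  "grad G f i x = (\<Sum>j\<in>UNIV. ginv G x i j * pd j f x)"

definition ricci :: "(real^'n \<Rightarrow> real^'n^'n) \<Rightarrow> 'n::finite \<Rightarrow> 'n \<Rightarrow> real^'n \<Rightarrow> real" where
  "ricci G i j x = (\<Sum>k\<in>UNIV. pd k (christoffel G k i j) x - pd j (christoffel G k i k) x
      + (\<Sum>l\<in>UNIV. christoffel G k k l x * christoffel G l i j x
                  - christoffel G k j l x * christoffel G l i k x))"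

definition Chat2 :: "nat \<Rightarrow> real" where
  "Chat2 n = 2 * (real n - 2) / (real n - 1)"

definition semi_riemannian_on :: "(real^'n::finite) set \<Rightarrow> (real^'n \<Rightarrow> real^'n^'n) \<Rightarrow> bool" where
  "semi_riemannian_on \<Omega> G \<longleftrightarrow> open \<Omega> \<and>
     (\<forall>i j. smooth_on \<Omega> (\<lambda>x. G x $ i $ j)) \<and>
     (\<forall>x\<in>\<Omega>. transpose (G x) = G x \<and> invertible (G x))"

text \<open>Electrostatic system (static Einstein--Maxwell equations) on an open
subset of R^n with metric G, n = CARD('n).\<close>
definition electrostatic :: "(real^'n::finite) set \<Rightarrow> (real^'n \<Rightarrow> real^'n^'n) \<Rightarrow>
    (real^'n \<Rightarrow> real) \<Rightarrow> (real^'n \<Rightarrow> real) \<Rightarrow> bool" where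
  "electrostatic \<Omega> G N \<psi> \<longleftrightarrow>
     CARD('n) \<ge> 3 \<and> semi_riemannian_on \<Omega> G \<and>
     smooth_on \<Omega> N \<and> smooth_on \<Omega> \<psi> \<and> (\<forall>x\<in>\<Omega>. N x > 0) \<and>
     (\<forall>x\<in>\<Omega>.
        laplacian G N x = Chat2 CARD('n) * gradsq G \<psi> x / N x \<and>
        divergence G (\<lambda>i y. grad G \<psi> i y / N y) x = 0 \<and>
        (\<forall>i j. N x * ricci G i j x =
            hess G N i j x - 2 * pd i \<psi> x * pd j \<psi> x / N x
            + 2 / ((real CARD('n) - 1) * N x) * gradsq G \<psi> x * G x $ i $ j))"

definition pseudo_euclidean :: "('n::finite \<Rightarrow> real) \<Rightarrow> real^'n^'n" where
  "pseudo_euclidean \<epsilon> = (\<chi> i j. if i = j then \<epsilon> i else 0)"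

end

theory Submission
  imports Defs
begin

(* For the conformally flat metric g/\<phi>^2 the inverse metric is \<phi>^2 g^-1 and the Christoffel
   symbols are linear in the logarithmic gradient a = d\<phi>/\<phi>:
   Gamma^k_ij = -(delta_jk a_i + delta_ik a_j - delta_ij eps_k eps_i a_k).
   Substituting them, the Ricci tensor, Hessian, Laplacian, gradient and divergence become explicit
   expressions in the coordinate derivatives of \<phi>, N and \<psi>; symmetrising the Ricci tensor uses
   the symmetry of second partial derivatives of \<phi>. Each field equation then differs from the
   corresponding equation of the system by a nonvanishing factor (\<phi>/N, \<phi>/N^2, 1/\<phi> or 1/\<phi>^2). *)

lemma has_real_derivative_along_line:
  fixes f :: "real^'n::finite \<Rightarrow> real"
  assumes "(f has_derivative D) (at (y + t *\<^sub>R v))"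
  shows "((\<lambda>s. f (y + s *\<^sub>R v)) has_real_derivative D v) (at t)"
proof -
  have "((\<lambda>s. y + s *\<^sub>R v) has_derivative (\<lambda>s. s *\<^sub>R v)) (at t)"
    by (auto intro!: derivative_eq_intros)
  from has_derivative_compose[OF this assms]
  have "((\<lambda>s. f (y + s *\<^sub>R v)) has_derivative (\<lambda>s. D (s *\<^sub>R v))) (at t)"
    by (simp add: o_def)
  moreover have "(\<lambda>s. D (s *\<^sub>R v)) = (*) (D v)"
    using has_derivative_linear[OF assms] by (auto simp: linear_scale mult.commute)
  ultimately show ?thesis by (simp add: has_field_derivative_def)
qed

lemma pd_eq_derivative:
  assumes "(f has_derivative D) (at y)"
  shows "pd i f y = D (axis i 1)"
  unfolding pd_def
  by (rule DERIV_imp_deriv, rule has_real_derivative_along_line) (use assms in simp)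

lemma pd_has_real_derivative_along_line:
  fixes f :: "real^'n::finite \<Rightarrow> real"
  assumes "f differentiable (at (y + t *\<^sub>R axis i 1))"
  shows "((\<lambda>s. f (y + s *\<^sub>R axis i 1)) has_real_derivative pd i f (y + t *\<^sub>R axis i 1)) (at t)"
proof -
  obtain D where D: "(f has_derivative D) (at (y + t *\<^sub>R axis i 1))"
    using assms differentiable_def by blast
  show ?thesis unfolding pd_eq_derivative[OF D] by (rule has_real_derivative_along_line[OF D])
qed

lemma pd_has_real_derivative:
  fixes f :: "real^'n::finite \<Rightarrow> real"
  assumes "f differentiable (at y)"
  shows "((\<lambda>t. f (y + t *\<^sub>R axis i 1)) has_real_derivative pd i f y) (at 0)"
  using pd_has_real_derivative_along_line[of f y 0 i] assms by simp

lemma pd_const [simp]: "pd i (\<lambda>x. c) y = 0"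
  unfolding pd_def by simp

lemma pd_add:
  assumes "f differentiable (at y)" "g differentiable (at y)"
  shows "pd i (\<lambda>x. f x + g x) y = pd i f y + pd i g y"
  unfolding pd_def[of i "\<lambda>x. f x + g x"]
  by (intro DERIV_imp_deriv DERIV_add pd_has_real_derivative assms)

lemma pd_diff:
  assumes "f differentiable (at y)" "g differentiable (at y)"
  shows "pd i (\<lambda>x. f x - g x) y = pd i f y - pd i g y"
  unfolding pd_def[of i "\<lambda>x. f x - g x"]
  by (intro DERIV_imp_deriv DERIV_diff pd_has_real_derivative assms)

lemma pd_mult:
  assumes "f differentiable (at y)" "g differentiable (at y)"
  shows "pd i (\<lambda>x. f x * g x) y = pd i f y * g y + f y * pd i g y"
  unfolding pd_def[of i "\<lambda>x. f x * g x"]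
  using DERIV_mult[OF pd_has_real_derivative[OF assms(1)] pd_has_real_derivative[OF assms(2)], of i i]
  by (intro DERIV_imp_deriv) (simp add: ac_simps)

lemma pd_cmult:
  assumes "f differentiable (at y)"
  shows "pd i (\<lambda>x. c * f x) y = c * pd i f y"
  using pd_mult[of "\<lambda>x. c" y f i] assms by simp

lemma pd_minus:
  assumes "f differentiable (at y)"
  shows "pd i (\<lambda>x. - f x) y = - pd i f y"
  using pd_cmult[of f y i "-1"] assms by simp

lemma pd_inverse:
  assumes "f differentiable (at y)" "f y \<noteq> 0"
  shows "pd i (\<lambda>x. inverse (f x)) y = - pd i f y / (f y)^2"
  unfolding pd_def[of i "\<lambda>x. inverse (f x)"]
  using DERIV_inverse_fun[OF pd_has_real_derivative[OF assms(1)], of i] assms(2)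
  by (intro DERIV_imp_deriv) (simp add: power2_eq_square divide_inverse mult.commute)

lemma pd_divide:
  assumes "f differentiable (at y)" "g differentiable (at y)" "g y \<noteq> 0"
  shows "pd i (\<lambda>x. f x / g x) y = (pd i f y * g y - f y * pd i g y) / (g y)^2"
proof -
  have "pd i (\<lambda>x. f x * inverse (g x)) y
      = pd i f y * inverse (g y) + f y * pd i (\<lambda>x. inverse (g x)) y"
    using assms by (intro pd_mult) simp_all
  also have "\<dots> = (pd i f y * g y - f y * pd i g y) / (g y)^2"
    unfolding pd_inverse[OF assms(2,3)] using assms by (simp add: field_simps power2_eq_square)
  finally show ?thesis by (simp add: divide_inverse)
qed

lemma pd_cong:
  assumes "open S" "y \<in> S" "\<And>z. z \<in> S \<Longrightarrow> f z = g z"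
  shows "pd i f y = pd i g y"
  unfolding pd_def
proof (rule deriv_cong_ev)
  have "continuous_on UNIV (\<lambda>t::real. y + t *\<^sub>R axis i 1)"
    by (intro continuous_intros)
  from open_vimage[OF assms(1) this] have "open {t::real. y + t *\<^sub>R axis i 1 \<in> S}"
    by (simp add: vimage_def)
  then show "\<forall>\<^sub>F t in nhds 0. f (y + t *\<^sub>R axis i 1) = g (y + t *\<^sub>R axis i 1)"
    unfolding eventually_nhds using assms(2,3) by force
qed simp

lemma pds_cong:
  assumes "open S" "y \<in> S" "\<And>z. z \<in> S \<Longrightarrow> f z = g z"
  shows "pds js f y = pds js g y"
  using assms(2)
proof (induction js arbitrary: y)
  case Nil
  then show ?case using assms(3) by simp
next
  case (Cons i js)
  then show ?case using pd_cong[OF assms(1) Cons.prems, of "pds js f" "pds js g" i] by simp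
qed

lemma pds_append_singleton: "pds (js @ [j]) f = pds js (pd j f)"
  by (induction js) auto

(* Truncation of smooth_on to derivatives of order at most m, so that closure properties
   can be proved by induction on m. *)
definition differentiable_upto :: "(real^'n::finite) set \<Rightarrow> nat \<Rightarrow> (real^'n \<Rightarrow> real) \<Rightarrow> bool" where
  "differentiable_upto S m f \<longleftrightarrow>
     (\<forall>js::'n list. length js \<le> m \<longrightarrow> (\<forall>x\<in>S. pds js f differentiable (at x)))"

lemma smooth_on_iff_differentiable_upto: "smooth_on S f \<longleftrightarrow> (\<forall>m. differentiable_upto S m f)"
  unfolding smooth_on_def differentiable_upto_def by (metis le_refl)

lemma differentiable_upto_0: "differentiable_upto S 0 f \<longleftrightarrow> (\<forall>x\<in>S. f differentiable (at x))"
  unfolding differentiable_upto_def by simp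

lemma differentiable_upto_Suc:
  fixes f :: "real^'n::finite \<Rightarrow> real"
  shows "differentiable_upto S (Suc m) f \<longleftrightarrow>
    (\<forall>x\<in>S. f differentiable (at x)) \<and> (\<forall>j. differentiable_upto S m (pd j f))"
proof
  assume f: "differentiable_upto S (Suc m) f"
  show "(\<forall>x\<in>S. f differentiable (at x)) \<and> (\<forall>j. differentiable_upto S m (pd j f))"
  proof
    show "\<forall>x\<in>S. f differentiable (at x)"
      using f[unfolded differentiable_upto_def, rule_format, of "[]"] by simp
    show "\<forall>j. differentiable_upto S m (pd j f)"
      unfolding differentiable_upto_def
    proof (intro allI impI ballI)
      fix j and js :: "'n list" and x assume "length js \<le> m" "x \<in> S"
      then show "pds js (pd j f) differentiable (at x)"
        using f[unfolded differentiable_upto_def, rule_format, of "js @ [j]"]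
        by (simp add: pds_append_singleton)
    qed
  qed
next
  assume f: "(\<forall>x\<in>S. f differentiable (at x)) \<and> (\<forall>j. differentiable_upto S m (pd j f))"
  show "differentiable_upto S (Suc m) f"
    unfolding differentiable_upto_def
  proof (intro allI impI ballI)
    fix js :: "'n list" and x assume "length js \<le> Suc m" "x \<in> S"
    then show "pds js f differentiable (at x)"
    proof (cases js rule: rev_cases)
      case (snoc ks j)
      then show ?thesis
        using f \<open>length js \<le> Suc m\<close> \<open>x \<in> S\<close> unfolding differentiable_upto_def
        by (simp add: pds_append_singleton)
    qed (use f in simp)
  qed
qed

lemma smooth_on_pd: "smooth_on S f \<Longrightarrow> smooth_on S (pd j f)"
  unfolding smooth_on_iff_differentiable_upto using differentiable_upto_Suc by blast

lemma smooth_on_imp_differentiable: "smooth_on S f \<Longrightarrow> x \<in> S \<Longrightarrow> f differentiable (at x)"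
  unfolding smooth_on_def by (metis pds.simps(1))

lemma differentiable_upto_cong:
  fixes f :: "real^'n::finite \<Rightarrow> real"
  assumes "open S" "\<And>z. z \<in> S \<Longrightarrow> f z = g z" "differentiable_upto S m f"
  shows "differentiable_upto S m g"
  unfolding differentiable_upto_def
proof (intro allI impI ballI)
  fix js :: "'n list" and x assume "length js \<le> m" "x \<in> S"
  then have "pds js f differentiable (at x)"
    using assms(3) unfolding differentiable_upto_def by blast
  moreover have "\<And>z. z \<in> S \<Longrightarrow> pds js f z = pds js g z"
    by (intro pds_cong[OF assms(1)] assms(2))
  ultimately show "pds js g differentiable (at x)"
    using has_derivative_transform_within_open[OF _ assms(1) \<open>x \<in> S\<close>]
    unfolding differentiable_def by blast
qed

lemma differentiable_upto_const: "differentiable_upto S m (\<lambda>x. c)"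
  by (induction m arbitrary: c) (simp_all add: differentiable_upto_0 differentiable_upto_Suc pd_const[abs_def])

lemma differentiable_upto_add:
  assumes "open S"
  shows "differentiable_upto S m f \<Longrightarrow> differentiable_upto S m g \<Longrightarrow>
    differentiable_upto S m (\<lambda>x. f x + g x)"
proof (induction m arbitrary: f g)
  case 0
  then show ?case by (simp add: differentiable_upto_0)
next
  case (Suc m)
  have "differentiable_upto S m (pd j (\<lambda>x. f x + g x))" for j
  proof (rule differentiable_upto_cong[OF assms])
    show "differentiable_upto S m (\<lambda>x. pd j f x + pd j g x)"
      using Suc by (simp add: differentiable_upto_Suc)
    show "z \<in> S \<Longrightarrow> pd j f z + pd j g z = pd j (\<lambda>x. f x + g x) z" for z
      using Suc.prems by (simp add: differentiable_upto_Suc pd_add)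
  qed
  then show ?case using Suc.prems by (simp add: differentiable_upto_Suc)
qed

lemma differentiable_upto_mult:
  assumes "open S"
  shows "differentiable_upto S m f \<Longrightarrow> differentiable_upto S m g \<Longrightarrow>
    differentiable_upto S m (\<lambda>x. f x * g x)"
proof (induction m arbitrary: f g)
  case 0
  then show ?case by (simp add: differentiable_upto_0)
next
  case (Suc m)
  have fg: "differentiable_upto S m f" "differentiable_upto S m g"
    using Suc.prems unfolding differentiable_upto_def by auto
  have "differentiable_upto S m (pd j (\<lambda>x. f x * g x))" for j
  proof (rule differentiable_upto_cong[OF assms])
    show "differentiable_upto S m (\<lambda>x. pd j f x * g x + f x * pd j g x)"
      using Suc fg by (intro differentiable_upto_add[OF assms]) (simp_all add: differentiable_upto_Suc)
    show "z \<in> S \<Longrightarrow> pd j f z * g z + f z * pd j g z = pd j (\<lambda>x. f x * g x) z" for z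
      using Suc.prems by (simp add: differentiable_upto_Suc pd_mult)
  qed
  then show ?case using Suc.prems by (simp add: differentiable_upto_Suc)
qed

lemma smooth_on_const: "smooth_on S (\<lambda>x. c)"
  unfolding smooth_on_iff_differentiable_upto by (simp add: differentiable_upto_const)

lemma smooth_on_mult:
  "open S \<Longrightarrow> smooth_on S f \<Longrightarrow> smooth_on S g \<Longrightarrow> smooth_on S (\<lambda>x. f x * g x)"
  unfolding smooth_on_iff_differentiable_upto by (simp add: differentiable_upto_mult)

lemma smooth_on_inverse:
  assumes "open S" "\<forall>x\<in>S. f x \<noteq> 0" "smooth_on S f"
  shows "smooth_on S (\<lambda>x. inverse (f x))"
  unfolding smooth_on_iff_differentiable_upto
proof
  fix m show "differentiable_upto S m (\<lambda>x. inverse (f x))"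
  proof (induction m)
    case 0
    then show ?case using assms by (simp add: differentiable_upto_0 smooth_on_imp_differentiable)
  next
    case (Suc m)
    have "differentiable_upto S m (pd j (\<lambda>x. inverse (f x)))" for j
    proof (rule differentiable_upto_cong[OF assms(1)])
      have "smooth_on S (\<lambda>x. - pd j f x)"
        using smooth_on_mult[OF assms(1) smooth_on_const smooth_on_pd[OF assms(3)], of "-1" j] by simp
      then show "differentiable_upto S m (\<lambda>x. (- pd j f x) * (inverse (f x) * inverse (f x)))"
        using Suc unfolding smooth_on_iff_differentiable_upto
        by (intro differentiable_upto_mult[OF assms(1)]) simp_all
      show "(- pd j f z) * (inverse (f z) * inverse (f z)) = pd j (\<lambda>x. inverse (f x)) z"
        if "z \<in> S" for z
        using assms that
        by (simp add: pd_inverse smooth_on_imp_differentiable power2_eq_square divide_inverse)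
    qed
    then show ?case using assms by (simp add: differentiable_upto_Suc smooth_on_imp_differentiable)
  qed
qed

section \<open>Symmetry of second partial derivatives\<close>

lemma MVT_symmetric:
  fixes g g' :: "real \<Rightarrow> real"
  assumes "h \<noteq> 0" "\<And>t. \<bar>t\<bar> \<le> \<bar>h\<bar> \<Longrightarrow> (g has_real_derivative g' t) (at t)"
  shows "\<exists>z. \<bar>z\<bar> \<le> \<bar>h\<bar> \<and> g h - g 0 = h * g' z"
proof (cases "h > 0")
  case True
  from MVT2[OF True, of g g'] assms(2) obtain z where "0 < z" "z < h" "g h - g 0 = (h - 0) * g' z"
    by fastforce
  then show ?thesis by (intro exI[of _ z]) auto
next
  case False
  with assms(1) have "h < 0" by simp
  from MVT2[OF this, of g g'] assms(2) obtain z where "h < z" "z < 0" "g 0 - g h = (0 - h) * g' z"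
    by fastforce
  then show ?thesis by (intro exI[of _ z]) (auto simp: algebra_simps)
qed

definition second_difference :: "(real^'n::finite \<Rightarrow> real) \<Rightarrow> real^'n \<Rightarrow> 'n \<Rightarrow> 'n \<Rightarrow> real \<Rightarrow> real" where
  "second_difference f x i j h =
     f (x + h *\<^sub>R axis i 1 + h *\<^sub>R axis j 1) - f (x + h *\<^sub>R axis i 1) - f (x + h *\<^sub>R axis j 1) + f x"

lemma second_difference_commute: "second_difference f x i j h = second_difference f x j i h"
  unfolding second_difference_def by (simp add: algebra_simps)

lemma second_difference_mean_value:
  fixes f :: "real^'n::finite \<Rightarrow> real"
  assumes "h \<noteq> 0" and diff: "\<And>y. norm (y - x) \<le> 2 * \<bar>h\<bar> \<Longrightarrow> f differentiable (at y)"
  shows "\<exists>z. \<bar>z\<bar> \<le> \<bar>h\<bar> \<and> second_difference f x i j h =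
     h * (pd i f (x + h *\<^sub>R axis j 1 + z *\<^sub>R axis i 1) - pd i f (x + z *\<^sub>R axis i 1))"
proof -
  define g where "g t = f (x + h *\<^sub>R axis j 1 + t *\<^sub>R axis i 1) - f (x + t *\<^sub>R axis i 1)" for t
  have "(g has_real_derivative
      pd i f (x + h *\<^sub>R axis j 1 + t *\<^sub>R axis i 1) - pd i f (x + t *\<^sub>R axis i 1)) (at t)"
    if "\<bar>t\<bar> \<le> \<bar>h\<bar>" for t
  proof -
    have "norm (h *\<^sub>R axis j (1::real) + t *\<^sub>R axis i 1) \<le> 2 * \<bar>h\<bar>"
      using norm_triangle_ineq[of "h *\<^sub>R axis j (1::real)" "t *\<^sub>R axis i 1"] that by simp
    then have "f differentiable (at (x + h *\<^sub>R axis j 1 + t *\<^sub>R axis i 1))"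
      by (intro diff) (simp add: add.assoc)
    moreover have "f differentiable (at (x + t *\<^sub>R axis i 1))"
      using that by (intro diff) simp
    ultimately show ?thesis
      unfolding g_def by (intro DERIV_diff pd_has_real_derivative_along_line)
  qed
  then obtain z where "\<bar>z\<bar> \<le> \<bar>h\<bar>"
    "g h - g 0 = h * (pd i f (x + h *\<^sub>R axis j 1 + z *\<^sub>R axis i 1) - pd i f (x + z *\<^sub>R axis i 1))"
    using MVT_symmetric[OF assms(1), of g
        "\<lambda>t. pd i f (x + h *\<^sub>R axis j 1 + t *\<^sub>R axis i 1) - pd i f (x + t *\<^sub>R axis i 1)"]
    by blast
  then show ?thesis
    unfolding g_def second_difference_def by (intro exI[of _ z]) (simp add: algebra_simps)
qed

lemma increment_approx_linear:
  fixes F :: "'a::real_normed_vector \<Rightarrow> real"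
  assumes "linear L"
    and approx: "\<And>y. norm (y - x) < d \<Longrightarrow> \<bar>F y - F x - L (y - x)\<bar> \<le> e * norm (y - x)"
    and "norm u < d" "norm v < d"
  shows "\<bar>F (x + u) - F (x + v) - L (u - v)\<bar> \<le> e * (norm u + norm v)"
proof -
  have "\<bar>F (x + u) - F x - L u\<bar> \<le> e * norm u" using approx[of "x + u"] assms(3) by simp
  moreover have "\<bar>F (x + v) - F x - L v\<bar> \<le> e * norm v" using approx[of "x + v"] assms(4) by simp
  moreover have "L (u - v) = L u - L v" using assms(1) by (simp add: linear_diff)
  ultimately show ?thesis by (simp add: abs_le_iff algebra_simps)
qed

lemma second_difference_tendsto:
  fixes f :: "real^'n::finite \<Rightarrow> real"
  assumes S: "open S" "x \<in> S" and f: "\<forall>y\<in>S. f differentiable (at y)"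
    and pd_f: "pd i f differentiable (at x)"
  shows "((\<lambda>h. second_difference f x i j h / h^2) \<longlongrightarrow> pd j (pd i f) x) (at 0)"
  unfolding LIM_eq
proof (intro allI impI)
  fix r :: real assume "r > 0"
  define e where "e = r / 4"
  have "e > 0" using \<open>r > 0\<close> by (simp add: e_def)
  obtain L where L: "(pd i f has_derivative L) (at x)" using pd_f differentiable_def by blast
  then have lin: "linear L" using has_derivative_linear by blast
  obtain d1 where "d1 > 0" and d1: "\<And>y. norm (y - x) < d1 \<Longrightarrow>
      \<bar>pd i f y - pd i f x - L (y - x)\<bar> \<le> e * norm (y - x)"
    using L \<open>e > 0\<close> unfolding has_derivative_at_alt by (metis real_norm_def)
  obtain d2 where "d2 > 0" "ball x d2 \<subseteq> S" using S open_contains_ball by blast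
  show "\<exists>s>0. \<forall>h. h \<noteq> 0 \<and> norm (h - 0) < s \<longrightarrow>
      norm (second_difference f x i j h / h^2 - pd j (pd i f) x) < r"
  proof (intro exI[of _ "min d1 d2 / 3"] conjI allI impI)
    show "0 < min d1 d2 / 3" using \<open>d1 > 0\<close> \<open>d2 > 0\<close> by simp
    fix h :: real assume "h \<noteq> 0 \<and> norm (h - 0) < min d1 d2 / 3"
    then have "h \<noteq> 0" and h: "2 * \<bar>h\<bar> < d1" "2 * \<bar>h\<bar> < d2" by auto
    have "f differentiable (at y)" if "norm (y - x) \<le> 2 * \<bar>h\<bar>" for y
    proof -
      have "y \<in> ball x d2" using that h by (simp add: dist_norm norm_minus_commute)
      then show ?thesis using f \<open>ball x d2 \<subseteq> S\<close> by blast
    qed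
    then obtain z where z: "\<bar>z\<bar> \<le> \<bar>h\<bar>" and sd: "second_difference f x i j h =
        h * (pd i f (x + h *\<^sub>R axis j 1 + z *\<^sub>R axis i 1) - pd i f (x + z *\<^sub>R axis i 1))"
      using second_difference_mean_value[OF \<open>h \<noteq> 0\<close>, of x f i j] by blast
    have u: "norm (h *\<^sub>R axis j (1::real) + z *\<^sub>R axis i 1) \<le> 2 * \<bar>h\<bar>"
      using norm_triangle_ineq[of "h *\<^sub>R axis j (1::real)" "z *\<^sub>R axis i 1"] z by simp
    have "\<bar>pd i f (x + (h *\<^sub>R axis j 1 + z *\<^sub>R axis i 1)) - pd i f (x + z *\<^sub>R axis i 1)
        - L (h *\<^sub>R axis j 1)\<bar> \<le> e * (norm (h *\<^sub>R axis j (1::real) + z *\<^sub>R axis i 1) + \<bar>z\<bar>)"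
      using increment_approx_linear[OF lin d1, where u = "h *\<^sub>R axis j 1 + z *\<^sub>R axis i 1"
          and v = "z *\<^sub>R axis i 1"]
        u z h by simp
    also have "\<dots> \<le> e * (3 * \<bar>h\<bar>)"
      using u z \<open>e > 0\<close> by (intro mult_left_mono) auto
    finally have "\<bar>pd i f (x + h *\<^sub>R axis j 1 + z *\<^sub>R axis i 1) - pd i f (x + z *\<^sub>R axis i 1)
        - h * pd j (pd i f) x\<bar> \<le> e * (3 * \<bar>h\<bar>)"
      using lin pd_eq_derivative[OF L, of j] by (simp add: linear_scale add.assoc)
    moreover have "second_difference f x i j h / h^2 - pd j (pd i f) x =
        (pd i f (x + h *\<^sub>R axis j 1 + z *\<^sub>R axis i 1) - pd i f (x + z *\<^sub>R axis i 1)
         - h * pd j (pd i f) x) / h"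
      using \<open>h \<noteq> 0\<close> unfolding sd by (simp add: field_simps power2_eq_square)
    ultimately have "norm (second_difference f x i j h / h^2 - pd j (pd i f) x) \<le> 3 * e"
      using \<open>h \<noteq> 0\<close> by (simp add: abs_divide divide_le_eq)
    then show "norm (second_difference f x i j h / h^2 - pd j (pd i f) x) < r"
      using \<open>r > 0\<close> unfolding e_def by linarith
  qed
qed

(* Young's form of Schwarz's theorem: besides differentiability of f near x, only differentiability
   of the first partials at x is needed. The second difference is symmetric in i and j, and divided
   by h^2 it tends to either mixed partial. *)
lemma pd_commute:
  fixes f :: "real^'n::finite \<Rightarrow> real"
  assumes "open S" "x \<in> S" "\<forall>y\<in>S. f differentiable (at y)"
    and "pd i f differentiable (at x)" "pd j f differentiable (at x)"
  shows "pd i (pd j f) x = pd j (pd i f) x"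
proof (rule tendsto_unique[OF at_neq_bot])
  show "((\<lambda>h. second_difference f x i j h / h^2) \<longlongrightarrow> pd j (pd i f) x) (at 0)"
    using second_difference_tendsto[OF assms(1-4)] .
  show "((\<lambda>h. second_difference f x i j h / h^2) \<longlongrightarrow> pd i (pd j f) x) (at 0)"
    using second_difference_tendsto[OF assms(1-3,5)] by (simp add: second_difference_commute)
qed

section \<open>The conformally flat metric and its Christoffel symbols\<close>

lemma matrix_inv_unique:
  fixes A B :: "real^'n::finite^'n"
  assumes "A ** B = mat 1" "B ** A = mat 1"
  shows "matrix_inv A = B"
proof -
  have "\<exists>A'. A ** A' = mat 1 \<and> A' ** A = mat 1" using assms by blast
  then have C: "A ** matrix_inv A = mat 1" "matrix_inv A ** A = mat 1"
    using someI_ex unfolding matrix_inv_def by (metis (mono_tags, lifting))+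
  have "matrix_inv A = matrix_inv A ** (A ** B)" using assms by simp
  also have "\<dots> = B" using C by (simp add: matrix_mul_assoc)
  finally show ?thesis .
qed

lemma diagonal_matrix_mult:
  "((\<chi> i j. if i = j then a i else 0) ** (\<chi> i j. if i = j then b i else 0) :: real^'n::finite^'n)
     = (\<chi> i j. if i = j then a i * b i else 0)"
  unfolding matrix_matrix_mult_def
  by (simp add: vec_eq_iff if_distrib[of "\<lambda>x. x * _"] cong: if_cong)

definition conformal_metric :: "('n::finite \<Rightarrow> real) \<Rightarrow> (real^'n \<Rightarrow> real) \<Rightarrow> real^'n \<Rightarrow> real^'n^'n" where
  "conformal_metric \<epsilon> \<phi> x = (1 / (\<phi> x)^2) *\<^sub>R pseudo_euclidean \<epsilon>"

lemma conformal_metric_component: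
  "conformal_metric \<epsilon> \<phi> x $ i $ j = (if i = j then \<epsilon> i else 0) / (\<phi> x)^2"
  by (simp add: conformal_metric_def pseudo_euclidean_def)

lemma conformal_metric_diagonal:
  "conformal_metric \<epsilon> \<phi> x = (\<chi> i j. if i = j then \<epsilon> i / (\<phi> x)^2 else 0)"
  by (simp add: conformal_metric_def pseudo_euclidean_def vec_eq_iff)

definition conformal_christoffel :: "('n::finite \<Rightarrow> real) \<Rightarrow> ('n \<Rightarrow> real) \<Rightarrow> 'n \<Rightarrow> 'n \<Rightarrow> 'n \<Rightarrow> real" where
  "conformal_christoffel \<epsilon> a k i j = - ((if j = k then a i else 0) + (if i = k then a j else 0)
       - (if i = j then \<epsilon> k * \<epsilon> i * a k else 0))"

lemma pd_conformal_christoffel: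
  assumes "\<And>m. f m differentiable (at x)"
  shows "pd l (\<lambda>y. conformal_christoffel \<epsilon> (\<lambda>m. f m y) k i j) x
       = conformal_christoffel \<epsilon> (\<lambda>m. pd l (f m) x) k i j"
  unfolding conformal_christoffel_def using assms
  by (cases "j = k"; cases "i = k"; cases "i = j"; simp add: pd_add pd_diff pd_cmult pd_minus)

lemma if_zero_mult: "(if P then a else 0) * b = (if P then a * b else (0::'a::mult_zero))"
  by simp

lemma mult_if_zero: "b * (if P then a else 0) = (if P then b * a else (0::'a::mult_zero))"
  by simp

lemma sum_if_zero: "(\<Sum>l\<in>A. if P then f l else 0) = (if P then sum f A else 0)"
  by simp

lemmas if_zero_simps = if_zero_mult mult_if_zero sum_if_zero

lemma all_pairs_if_iff:
  "(\<forall>i j. if i = j then P i else Q i j) \<longleftrightarrow> (\<forall>i j. i \<noteq> j \<longrightarrow> Q i j) \<and> (\<forall>i. P i)"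
  by (metis (full_types))

lemma eq_iff_eq_0_if_diff_eq_mult: "(c::real) \<noteq> 0 \<Longrightarrow> a - b = c * s \<Longrightarrow> (a = b \<longleftrightarrow> s = 0)"
  by auto

locale sign_vector =
  fixes \<epsilon> :: "'n::finite \<Rightarrow> real"
  assumes sign: "\<forall>i. \<epsilon> i = 1 \<or> \<epsilon> i = -1"
begin

lemma sign_square [simp]: "\<epsilon> i * \<epsilon> i = 1"
  using sign by (metis mult_1 mult_minus1 minus_minus)

lemma sign_square_mult [simp]: "\<epsilon> i * (\<epsilon> i * x) = x"
  by (simp add: mult.assoc[symmetric])

lemma inverse_conformal_metric:
  assumes "\<phi> x \<noteq> 0"
  shows "matrix_inv (conformal_metric \<epsilon> \<phi> x) = (\<chi> i j. if i = j then \<epsilon> i * (\<phi> x)^2 else 0)"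
  using assms
  by (intro matrix_inv_unique) (simp_all add: conformal_metric_diagonal diagonal_matrix_mult mat_def vec_eq_iff)

lemma ginv_conformal_metric:
  assumes "\<phi> x \<noteq> 0"
  shows "ginv (conformal_metric \<epsilon> \<phi>) x k l = (if k = l then \<epsilon> k * (\<phi> x)^2 else 0)"
  using inverse_conformal_metric[of \<phi> x, OF assms] by (simp add: ginv_def)

lemma conformal_christoffel_contract_left: "conformal_christoffel \<epsilon> a k k l = - a l"
  unfolding conformal_christoffel_def by auto

lemma conformal_christoffel_contract_right: "conformal_christoffel \<epsilon> a k i k = - a i"
  unfolding conformal_christoffel_def by (auto simp: mult.commute)

lemma sum_conformal_christoffel_mult:
  "(\<Sum>k\<in>UNIV. conformal_christoffel \<epsilon> a k i j * c k) =
    - (c j * a i + c i * a j - (if i = j then \<epsilon> i * (\<Sum>k\<in>UNIV. \<epsilon> k * a k * c k) else 0))"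
  unfolding conformal_christoffel_def
  by (cases "i = j") (simp_all add: algebra_simps sum.distrib sum_subtractf sum_distrib_left sum_negf if_zero_simps)

lemma sum_conformal_christoffel_trace:
  "(\<Sum>k\<in>UNIV. conformal_christoffel \<epsilon> (b k) k i j) =
    - (b j i + b i j - (if i = j then \<epsilon> i * (\<Sum>k\<in>UNIV. \<epsilon> k * b k k) else 0))"
  unfolding conformal_christoffel_def
  by (cases "i = j") (simp_all add: algebra_simps sum.distrib sum_subtractf sum_distrib_left sum_negf if_zero_simps)

lemma sum_conformal_christoffel_contracted_products:
  "(\<Sum>k\<in>UNIV. \<Sum>l\<in>UNIV. conformal_christoffel \<epsilon> a k k l * conformal_christoffel \<epsilon> a l i j) =
   real CARD('n) * (2 * a i * a j - (if i = j then \<epsilon> i * (\<Sum>l\<in>UNIV. \<epsilon> l * (a l)^2) else 0))"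
proof -
  have "(\<Sum>l\<in>UNIV. conformal_christoffel \<epsilon> a k k l * conformal_christoffel \<epsilon> a l i j)
      = - (\<Sum>l\<in>UNIV. conformal_christoffel \<epsilon> a l i j * a l)" for k
    by (simp add: conformal_christoffel_contract_left sum_negf mult.commute)
  then have "(\<Sum>k\<in>UNIV. \<Sum>l\<in>UNIV. conformal_christoffel \<epsilon> a k k l * conformal_christoffel \<epsilon> a l i j)
      = - real CARD('n) * (\<Sum>l\<in>UNIV. conformal_christoffel \<epsilon> a l i j * a l)"
    by simp
  also have "\<dots> = real CARD('n) *
      (2 * a i * a j - (if i = j then \<epsilon> i * (\<Sum>l\<in>UNIV. \<epsilon> l * (a l)^2) else 0))"
    unfolding sum_conformal_christoffel_mult by (simp add: power2_eq_square mult.assoc right_diff_distrib)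
  finally show ?thesis .
qed

lemma sum_conformal_christoffel_products:
  "(\<Sum>k\<in>UNIV. \<Sum>l\<in>UNIV. conformal_christoffel \<epsilon> a k j l * conformal_christoffel \<epsilon> a l i k) =
   (real CARD('n) + 2) * a i * a j - (if i = j then 2 * \<epsilon> i * (\<Sum>l\<in>UNIV. \<epsilon> l * (a l)^2) else 0)"
  unfolding conformal_christoffel_def
  by (cases "i = j")
    (simp_all add: algebra_simps sum.distrib sum_subtractf sum_distrib_left power2_eq_square sum_negf if_zero_simps)

end

section \<open>Curvature of a conformally flat metric\<close>

locale conformally_flat = sign_vector \<epsilon> for \<epsilon> :: "'n::finite \<Rightarrow> real" +
  fixes \<phi> :: "real^'n \<Rightarrow> real" and \<Omega> :: "(real^'n) set"
  assumes open_domain: "open \<Omega>" and positive: "\<forall>x\<in>\<Omega>. \<phi> x > 0" and smooth: "smooth_on \<Omega> \<phi>"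
begin

lemma phi_nonzero: "x \<in> \<Omega> \<Longrightarrow> \<phi> x \<noteq> 0"
  using positive by force

lemma phi_differentiable: "x \<in> \<Omega> \<Longrightarrow> \<phi> differentiable (at x)"
  using smooth_on_imp_differentiable[OF smooth] .

lemma pd_phi_differentiable: "x \<in> \<Omega> \<Longrightarrow> pd i \<phi> differentiable (at x)"
  using smooth_on_imp_differentiable[OF smooth_on_pd[OF smooth]] .

lemma pd_pd_phi_commute: "x \<in> \<Omega> \<Longrightarrow> pd j (pd i \<phi>) x = pd i (pd j \<phi>) x"
  using pd_commute[OF open_domain _ _ pd_phi_differentiable pd_phi_differentiable] phi_differentiable by metis

lemma semi_riemannian: "semi_riemannian_on \<Omega> (conformal_metric \<epsilon> \<phi>)"
  unfolding semi_riemannian_on_def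
proof (intro conjI allI ballI open_domain)
  fix i j
  have "(\<lambda>x. conformal_metric \<epsilon> \<phi> x $ i $ j)
      = (\<lambda>x. (if i = j then \<epsilon> i else 0) * (inverse (\<phi> x) * inverse (\<phi> x)))"
    by (simp add: conformal_metric_component fun_eq_iff divide_inverse power2_eq_square)
  moreover have "smooth_on \<Omega> (\<lambda>x. inverse (\<phi> x))"
    using smooth_on_inverse[OF open_domain _ smooth] phi_nonzero by blast
  ultimately show "smooth_on \<Omega> (\<lambda>x. conformal_metric \<epsilon> \<phi> x $ i $ j)"
    by (simp add: smooth_on_mult[OF open_domain] smooth_on_const)
next
  fix x assume "x \<in> \<Omega>"
  show "transpose (conformal_metric \<epsilon> \<phi> x) = conformal_metric \<epsilon> \<phi> x"
    by (simp add: conformal_metric_diagonal transpose_def vec_eq_iff)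
  show "invertible (conformal_metric \<epsilon> \<phi> x)"
    unfolding invertible_def
    using phi_nonzero[OF \<open>x \<in> \<Omega>\<close>]
    by (intro exI[of _ "\<chi> i j. if i = j then \<epsilon> i * (\<phi> x)^2 else 0"])
      (simp add: conformal_metric_diagonal diagonal_matrix_mult mat_def vec_eq_iff)
qed

lemma pd_conformal_metric_component:
  assumes x: "x \<in> \<Omega>"
  shows "pd l (\<lambda>y. conformal_metric \<epsilon> \<phi> y $ i $ j) x
       = (if i = j then \<epsilon> i else 0) * (-2 * pd l \<phi> x / (\<phi> x)^3)"
proof -
  have d: "(\<lambda>y. \<phi> y * \<phi> y) differentiable (at x)" using phi_differentiable[OF x] by simp
  have "pd l (\<lambda>y. inverse (\<phi> y * \<phi> y)) x = - pd l (\<lambda>y. \<phi> y * \<phi> y) x / (\<phi> x * \<phi> x)^2"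
    using phi_nonzero[OF x] by (intro pd_inverse[OF d]) simp
  also have "\<dots> = -2 * pd l \<phi> x / (\<phi> x)^3"
    using phi_nonzero[OF x]
    by (simp add: pd_mult[OF phi_differentiable[OF x] phi_differentiable[OF x]]
        power2_eq_square power3_eq_cube field_simps)
  finally have "pd l (\<lambda>y. inverse (\<phi> y * \<phi> y)) x = -2 * pd l \<phi> x / (\<phi> x)^3" .
  moreover have "(\<lambda>y. inverse (\<phi> y * \<phi> y)) differentiable (at x)"
    using phi_nonzero[OF x] by (intro differentiable_inverse[OF d]) simp
  moreover have "(\<lambda>y. conformal_metric \<epsilon> \<phi> y $ i $ j)
      = (\<lambda>y. (if i = j then \<epsilon> i else 0) * inverse (\<phi> y * \<phi> y))"
    by (simp add: conformal_metric_component divide_inverse power2_eq_square fun_eq_iff)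
  ultimately show ?thesis by (simp add: pd_cmult)
qed

lemma christoffel_conformal_metric:
  assumes x: "x \<in> \<Omega>"
  shows "christoffel (conformal_metric \<epsilon> \<phi>) k i j x
       = conformal_christoffel \<epsilon> (\<lambda>m. pd m \<phi> x / \<phi> x) k i j"
proof -
  have "christoffel (conformal_metric \<epsilon> \<phi>) k i j x = (1/2) * (\<epsilon> k * (\<phi> x)^2 *
      (pd i (\<lambda>y. conformal_metric \<epsilon> \<phi> y $ j $ k) x + pd j (\<lambda>y. conformal_metric \<epsilon> \<phi> y $ i $ k) x
       - pd k (\<lambda>y. conformal_metric \<epsilon> \<phi> y $ i $ j) x))"
    unfolding christoffel_def ginv_conformal_metric[of \<phi> x, OF phi_nonzero[OF x]]
    by (simp add: if_zero_simps cong: if_cong)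
  also have "\<dots> = conformal_christoffel \<epsilon> (\<lambda>m. pd m \<phi> x / \<phi> x) k i j"
    unfolding pd_conformal_metric_component[OF x] conformal_christoffel_def
    using phi_nonzero[OF x] by (auto simp: power2_eq_square power3_eq_cube field_simps)
  finally show ?thesis .
qed

lemma pd_christoffel_conformal_metric:
  assumes x: "x \<in> \<Omega>"
  shows "pd l (christoffel (conformal_metric \<epsilon> \<phi>) k i j) x
       = conformal_christoffel \<epsilon> (\<lambda>m. pd l (\<lambda>z. pd m \<phi> z / \<phi> z) x) k i j"
proof -
  have "pd l (christoffel (conformal_metric \<epsilon> \<phi>) k i j) x
      = pd l (\<lambda>y. conformal_christoffel \<epsilon> (\<lambda>m. pd m \<phi> y / \<phi> y) k i j) x"
    by (rule pd_cong[OF open_domain x]) (simp add: christoffel_conformal_metric)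
  also have "\<dots> = conformal_christoffel \<epsilon> (\<lambda>m. pd l (\<lambda>z. pd m \<phi> z / \<phi> z) x) k i j"
    using phi_differentiable[OF x] pd_phi_differentiable[OF x] phi_nonzero[OF x]
    by (intro pd_conformal_christoffel) simp
  finally show ?thesis .
qed

lemma ricci_conformal_metric:
  assumes x: "x \<in> \<Omega>"
  shows "ricci (conformal_metric \<epsilon> \<phi>) i j x =
    ((real CARD('n) - 2) * pd i (pd j \<phi>) x * \<phi> x
     + (if i = j then \<epsilon> i * (\<phi> x * (\<Sum>k\<in>UNIV. \<epsilon> k * pd k (pd k \<phi>) x)
          - (real CARD('n) - 1) * (\<Sum>k\<in>UNIV. \<epsilon> k * (pd k \<phi> x)^2)) else 0)) / (\<phi> x)^2"
proof -
  define a where "a m = pd m \<phi> x / \<phi> x" for m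
  define b where "b k m = pd k (\<lambda>z. pd m \<phi> z / \<phi> z) x" for k m
  have b: "b k m = (pd k (pd m \<phi>) x * \<phi> x - pd m \<phi> x * pd k \<phi> x) / (\<phi> x)^2" for k m
    unfolding b_def using pd_divide pd_phi_differentiable[OF x] phi_differentiable[OF x] phi_nonzero[OF x] by blast
  have "ricci (conformal_metric \<epsilon> \<phi>) i j x =
     (\<Sum>k\<in>UNIV. conformal_christoffel \<epsilon> (b k) k i j)
     - (\<Sum>k\<in>UNIV. conformal_christoffel \<epsilon> (b j) k i k)
     + (\<Sum>k\<in>UNIV. \<Sum>l\<in>UNIV. conformal_christoffel \<epsilon> a k k l * conformal_christoffel \<epsilon> a l i j)
     - (\<Sum>k\<in>UNIV. \<Sum>l\<in>UNIV. conformal_christoffel \<epsilon> a k j l * conformal_christoffel \<epsilon> a l i k)"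
    unfolding ricci_def pd_christoffel_conformal_metric[OF x] christoffel_conformal_metric[OF x]
      a_def[symmetric] b_def[symmetric]
    by (simp add: sum.distrib sum_subtractf)
  also have "\<dots> = ((real CARD('n) - 2) * pd i (pd j \<phi>) x * \<phi> x
     + (if i = j then \<epsilon> i * (\<phi> x * (\<Sum>k\<in>UNIV. \<epsilon> k * pd k (pd k \<phi>) x)
          - (real CARD('n) - 1) * (\<Sum>k\<in>UNIV. \<epsilon> k * (pd k \<phi> x)^2)) else 0)) / (\<phi> x)^2"
    unfolding sum_conformal_christoffel_trace sum_conformal_christoffel_contracted_products
      sum_conformal_christoffel_products conformal_christoffel_contract_right b a_def
      pd_pd_phi_commute[OF x, of i j]
    using phi_nonzero[OF x]
    by (cases "i = j") (simp_all add: field_simps power2_eq_square sum_divide_distrib[symmetric]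
        sum_distrib_left sum_subtractf)
  finally show ?thesis .
qed

lemma hess_conformal_metric:
  assumes x: "x \<in> \<Omega>"
  shows "hess (conformal_metric \<epsilon> \<phi>) f i j x = pd i (pd j f) x
     + (pd i \<phi> x * pd j f x + pd j \<phi> x * pd i f x) / \<phi> x
     - (if i = j then \<epsilon> i * (\<Sum>k\<in>UNIV. \<epsilon> k * pd k \<phi> x * pd k f x) / \<phi> x else 0)"
  unfolding hess_def christoffel_conformal_metric[OF x] sum_conformal_christoffel_mult
  using phi_nonzero[OF x] by (simp add: field_simps sum_divide_distrib[symmetric])

lemma laplacian_conformal_metric:
  assumes x: "x \<in> \<Omega>"
  shows "laplacian (conformal_metric \<epsilon> \<phi>) f x = (\<phi> x)^2 * ((\<Sum>k\<in>UNIV. \<epsilon> k * pd k (pd k f) x)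
     - (real CARD('n) - 2) * (\<Sum>k\<in>UNIV. \<epsilon> k * pd k \<phi> x * pd k f x) / \<phi> x)"
proof -
  have "laplacian (conformal_metric \<epsilon> \<phi>) f x
      = (\<Sum>i\<in>UNIV. \<epsilon> i * (\<phi> x)^2 * hess (conformal_metric \<epsilon> \<phi>) f i i x)"
    unfolding laplacian_def ginv_conformal_metric[of \<phi> x, OF phi_nonzero[OF x]]
    by (simp add: if_zero_simps cong: if_cong)
  also have "\<dots> = (\<phi> x)^2 * ((\<Sum>k\<in>UNIV. \<epsilon> k * pd k (pd k f) x)
     - (real CARD('n) - 2) * (\<Sum>k\<in>UNIV. \<epsilon> k * pd k \<phi> x * pd k f x) / \<phi> x)"
    unfolding hess_conformal_metric[OF x] using phi_nonzero[OF x]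
    by (simp add: algebra_simps sum.distrib sum_subtractf sum_distrib_left
        sum_divide_distrib[symmetric] diff_divide_distrib add_divide_distrib)
  finally show ?thesis .
qed

lemma gradsq_conformal_metric:
  assumes x: "x \<in> \<Omega>"
  shows "gradsq (conformal_metric \<epsilon> \<phi>) f x = (\<phi> x)^2 * (\<Sum>k\<in>UNIV. \<epsilon> k * (pd k f x)^2)"
  unfolding gradsq_def ginv_conformal_metric[of \<phi> x, OF phi_nonzero[OF x]]
  by (simp add: if_zero_simps cong: if_cong) (simp add: sum_distrib_left power2_eq_square ac_simps)

lemma grad_conformal_metric:
  assumes x: "x \<in> \<Omega>"
  shows "grad (conformal_metric \<epsilon> \<phi>) f i x = \<epsilon> i * (\<phi> x)^2 * pd i f x"
  unfolding grad_def ginv_conformal_metric[of \<phi> x, OF phi_nonzero[OF x]]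
  by (simp add: if_zero_simps cong: if_cong)

lemma divergence_conformal_metric:
  assumes x: "x \<in> \<Omega>" and N: "\<forall>y\<in>\<Omega>. N y \<noteq> 0" "smooth_on \<Omega> N" and \<psi>: "smooth_on \<Omega> \<psi>"
  shows "divergence (conformal_metric \<epsilon> \<phi>) (\<lambda>i y. grad (conformal_metric \<epsilon> \<phi>) \<psi> i y / N y) x =
    (\<Sum>i\<in>UNIV. \<epsilon> i * (((2 * \<phi> x * pd i \<phi> x * pd i \<psi> x + (\<phi> x)^2 * pd i (pd i \<psi>) x) * N x
        - (\<phi> x)^2 * pd i \<psi> x * pd i N x) / (N x)^2))
    - real CARD('n) * (\<Sum>k\<in>UNIV. \<epsilon> k * \<phi> x * pd k \<phi> x * pd k \<psi> x / N x)"
proof -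
  have dN: "N differentiable (at x)" using smooth_on_imp_differentiable[OF N(2) x] .
  have d\<psi>: "pd i \<psi> differentiable (at x)" for i
    using smooth_on_imp_differentiable[OF smooth_on_pd[OF \<psi>] x] .
  have "pd i (\<lambda>y. grad (conformal_metric \<epsilon> \<phi>) \<psi> i y / N y) x =
      \<epsilon> i * (((2 * \<phi> x * pd i \<phi> x * pd i \<psi> x + (\<phi> x)^2 * pd i (pd i \<psi>) x) * N x
        - (\<phi> x)^2 * pd i \<psi> x * pd i N x) / (N x)^2)" for i
  proof -
    have "pd i (\<lambda>y. grad (conformal_metric \<epsilon> \<phi>) \<psi> i y / N y) x
        = pd i (\<lambda>y. \<epsilon> i * ((\<phi> y * \<phi> y * pd i \<psi> y) / N y)) x"
      by (rule pd_cong[OF open_domain x]) (simp add: grad_conformal_metric power2_eq_square)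
    also have "\<dots> = \<epsilon> i * pd i (\<lambda>y. (\<phi> y * \<phi> y * pd i \<psi> y) / N y) x"
      using x phi_differentiable d\<psi> dN N(1) by (intro pd_cmult) simp
    also have "pd i (\<lambda>y. (\<phi> y * \<phi> y * pd i \<psi> y) / N y) x =
        (pd i (\<lambda>y. \<phi> y * \<phi> y * pd i \<psi> y) x * N x - (\<phi> x * \<phi> x * pd i \<psi> x) * pd i N x) / (N x)^2"
      using x phi_differentiable d\<psi> dN N(1) by (intro pd_divide) simp_all
    also have "pd i (\<lambda>y. \<phi> y * \<phi> y * pd i \<psi> y) x =
        (pd i \<phi> x * \<phi> x + \<phi> x * pd i \<phi> x) * pd i \<psi> x + \<phi> x * \<phi> x * pd i (pd i \<psi>) x"
      using x phi_differentiable d\<psi> by (simp add: pd_mult)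
    finally show ?thesis by (simp add: algebra_simps power2_eq_square)
  qed
  moreover have "christoffel (conformal_metric \<epsilon> \<phi>) i i k x = - (pd k \<phi> x / \<phi> x)" for i k
    unfolding christoffel_conformal_metric[OF x] conformal_christoffel_contract_left ..
  ultimately show ?thesis
    unfolding divergence_def grad_conformal_metric[OF x]
    using phi_nonzero[OF x]
    by (simp add: sum.distrib sum_negf sum_subtractf sum_distrib_left power2_eq_square ac_simps)
qed

section \<open>The field equations\<close>

lemma laplacian_equation_iff:
  assumes x: "x \<in> \<Omega>" and N: "N x \<noteq> 0"
  shows "laplacian (conformal_metric \<epsilon> \<phi>) N x = Chat2 CARD('n) * gradsq (conformal_metric \<epsilon> \<phi>) \<psi> x / N x
    \<longleftrightarrow> (\<Sum>k\<in>UNIV. \<epsilon> k * (\<phi> x * N x * pd k (pd k N) x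
           - (real CARD('n) - 2) * N x * pd k \<phi> x * pd k N x
           - Chat2 CARD('n) * \<phi> x * (pd k \<psi> x)^2)) = 0"
proof (rule eq_iff_eq_0_if_diff_eq_mult)
  show "\<phi> x / N x \<noteq> 0" using phi_nonzero[OF x] N by simp
  define A where "A = (\<Sum>k\<in>UNIV. \<epsilon> k * pd k (pd k N) x)"
  define T where "T = (\<Sum>k\<in>UNIV. \<epsilon> k * pd k \<phi> x * pd k N x)"
  define Q where "Q = (\<Sum>k\<in>UNIV. \<epsilon> k * (pd k \<psi> x)^2)"
  have sum: "(\<Sum>k\<in>UNIV. \<epsilon> k * (\<phi> x * N x * pd k (pd k N) x
           - (real CARD('n) - 2) * N x * pd k \<phi> x * pd k N x
           - Chat2 CARD('n) * \<phi> x * (pd k \<psi> x)^2))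
      = \<phi> x * N x * A - (real CARD('n) - 2) * N x * T - Chat2 CARD('n) * \<phi> x * Q"
    unfolding A_def T_def Q_def by (simp add: sum_subtractf sum.distrib sum_distrib_left algebra_simps)
  have lap_gradsq: "laplacian (conformal_metric \<epsilon> \<phi>) N x = (\<phi> x)^2 * (A - (real CARD('n) - 2) * T / \<phi> x)"
    "gradsq (conformal_metric \<epsilon> \<phi>) \<psi> x = (\<phi> x)^2 * Q"
    unfolding A_def T_def Q_def
    by (simp_all add: laplacian_conformal_metric[OF x] gradsq_conformal_metric[OF x])
  show "laplacian (conformal_metric \<epsilon> \<phi>) N x - Chat2 CARD('n) * gradsq (conformal_metric \<epsilon> \<phi>) \<psi> x / N x
      = \<phi> x / N x * (\<Sum>k\<in>UNIV. \<epsilon> k * (\<phi> x * N x * pd k (pd k N) x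
           - (real CARD('n) - 2) * N x * pd k \<phi> x * pd k N x
           - Chat2 CARD('n) * \<phi> x * (pd k \<psi> x)^2))"
    unfolding sum lap_gradsq using phi_nonzero[OF x] N by (simp add: field_simps power2_eq_square)
qed

lemma divergence_equation_iff:
  assumes x: "x \<in> \<Omega>" and N: "\<forall>y\<in>\<Omega>. N y \<noteq> 0" "smooth_on \<Omega> N" and \<psi>: "smooth_on \<Omega> \<psi>"
  shows "divergence (conformal_metric \<epsilon> \<phi>) (\<lambda>i y. grad (conformal_metric \<epsilon> \<phi>) \<psi> i y / N y) x = 0
    \<longleftrightarrow> (\<Sum>k\<in>UNIV. \<epsilon> k * (N x * \<phi> x * pd k (pd k \<psi>) x
           - (real CARD('n) - 2) * N x * pd k \<phi> x * pd k \<psi> x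
           - \<phi> x * pd k \<psi> x * pd k N x)) = 0"
proof (rule eq_iff_eq_0_if_diff_eq_mult)
  show "\<phi> x / (N x)^2 \<noteq> 0" using phi_nonzero[OF x] N x by simp
  define B where "B = (\<Sum>k\<in>UNIV. \<epsilon> k * pd k (pd k \<psi>) x)"
  define U where "U = (\<Sum>k\<in>UNIV. \<epsilon> k * pd k \<phi> x * pd k \<psi> x)"
  define V where "V = (\<Sum>k\<in>UNIV. \<epsilon> k * pd k \<psi> x * pd k N x)"
  have sum: "(\<Sum>k\<in>UNIV. \<epsilon> k * (N x * \<phi> x * pd k (pd k \<psi>) x
           - (real CARD('n) - 2) * N x * pd k \<phi> x * pd k \<psi> x
           - \<phi> x * pd k \<psi> x * pd k N x))
      = N x * \<phi> x * B - (real CARD('n) - 2) * N x * U - \<phi> x * V"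
    unfolding B_def U_def V_def by (simp add: sum_subtractf sum.distrib sum_distrib_left algebra_simps)
  have div: "divergence (conformal_metric \<epsilon> \<phi>) (\<lambda>i y. grad (conformal_metric \<epsilon> \<phi>) \<psi> i y / N y) x
      = (2 * \<phi> x * N x * U + (\<phi> x)^2 * N x * B - (\<phi> x)^2 * V) / (N x)^2
        - real CARD('n) * \<phi> x * U / N x"
    unfolding divergence_conformal_metric[OF x N \<psi>] B_def U_def V_def
    by (simp add: sum_subtractf sum.distrib sum_distrib_left sum_divide_distrib[symmetric] algebra_simps)
  show "divergence (conformal_metric \<epsilon> \<phi>) (\<lambda>i y. grad (conformal_metric \<epsilon> \<phi>) \<psi> i y / N y) x - 0
      = \<phi> x / (N x)^2 * (\<Sum>k\<in>UNIV. \<epsilon> k * (N x * \<phi> x * pd k (pd k \<psi>) x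
           - (real CARD('n) - 2) * N x * pd k \<phi> x * pd k \<psi> x
           - \<phi> x * pd k \<psi> x * pd k N x))"
    unfolding sum div using phi_nonzero[OF x] N x by (simp add: field_simps power2_eq_square)
qed

lemma ricci_equation_off_diagonal_iff:
  assumes x: "x \<in> \<Omega>" and N: "N x \<noteq> 0" and "i \<noteq> j"
  shows "N x * ricci (conformal_metric \<epsilon> \<phi>) i j x =
      hess (conformal_metric \<epsilon> \<phi>) N i j x - 2 * pd i \<psi> x * pd j \<psi> x / N x
      + 2 / ((real CARD('n) - 1) * N x) * gradsq (conformal_metric \<epsilon> \<phi>) \<psi> x * conformal_metric \<epsilon> \<phi> x $ i $ j
    \<longleftrightarrow> (real CARD('n) - 2) * N x * pd i (pd j \<phi>) x - \<phi> x * pd i (pd j N) x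
         - pd i \<phi> x * pd j N x - pd j \<phi> x * pd i N x
         + 2 * (\<phi> x / N x) * pd i \<psi> x * pd j \<psi> x = 0"
proof (rule eq_iff_eq_0_if_diff_eq_mult)
  show "1 / \<phi> x \<noteq> 0" using phi_nonzero[OF x] by simp
  show "N x * ricci (conformal_metric \<epsilon> \<phi>) i j x -
      (hess (conformal_metric \<epsilon> \<phi>) N i j x - 2 * pd i \<psi> x * pd j \<psi> x / N x
      + 2 / ((real CARD('n) - 1) * N x) * gradsq (conformal_metric \<epsilon> \<phi>) \<psi> x * conformal_metric \<epsilon> \<phi> x $ i $ j)
    = 1 / \<phi> x * ((real CARD('n) - 2) * N x * pd i (pd j \<phi>) x - \<phi> x * pd i (pd j N) x
         - pd i \<phi> x * pd j N x - pd j \<phi> x * pd i N x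
         + 2 * (\<phi> x / N x) * pd i \<psi> x * pd j \<psi> x)"
    unfolding ricci_conformal_metric[OF x] hess_conformal_metric[OF x] conformal_metric_component
    using \<open>i \<noteq> j\<close> phi_nonzero[OF x] N by (simp add: field_simps power2_eq_square)
qed

lemma ricci_equation_diagonal_iff:
  assumes x: "x \<in> \<Omega>" and N: "N x \<noteq> 0" and n: "CARD('n) \<ge> 2"
  shows "N x * ricci (conformal_metric \<epsilon> \<phi>) i i x =
      hess (conformal_metric \<epsilon> \<phi>) N i i x - 2 * pd i \<psi> x * pd i \<psi> x / N x
      + 2 / ((real CARD('n) - 1) * N x) * gradsq (conformal_metric \<epsilon> \<phi>) \<psi> x * conformal_metric \<epsilon> \<phi> x $ i $ i
    \<longleftrightarrow> \<phi> x * ((real CARD('n) - 2) * N x * pd i (pd i \<phi>) x - \<phi> x * pd i (pd i N) x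
                 - 2 * pd i \<phi> x * pd i N x + 2 * (\<phi> x / N x) * (pd i \<psi> x)^2)
         + \<epsilon> i * (\<Sum>k\<in>UNIV. \<epsilon> k *
             (\<phi> x * pd k (pd k \<phi>) x * N x + \<phi> x * pd k \<phi> x * pd k N x
              - (real CARD('n) - 1) * N x * (pd k \<phi> x)^2
              - 2 / ((real CARD('n) - 1) * N x) * (\<phi> x)^2 * (pd k \<psi> x)^2)) = 0"
proof (rule eq_iff_eq_0_if_diff_eq_mult)
  show "1 / (\<phi> x)^2 \<noteq> 0" using phi_nonzero[OF x] by simp
  define P where "P = (\<Sum>k\<in>UNIV. \<epsilon> k * pd k (pd k \<phi>) x)"
  define S where "S = (\<Sum>k\<in>UNIV. \<epsilon> k * (pd k \<phi> x)^2)"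
  define T where "T = (\<Sum>k\<in>UNIV. \<epsilon> k * pd k \<phi> x * pd k N x)"
  define Q where "Q = (\<Sum>k\<in>UNIV. \<epsilon> k * (pd k \<psi> x)^2)"
  have sum: "(\<Sum>k\<in>UNIV. \<epsilon> k *
             (\<phi> x * pd k (pd k \<phi>) x * N x + \<phi> x * pd k \<phi> x * pd k N x
              - (real CARD('n) - 1) * N x * (pd k \<phi> x)^2
              - 2 / ((real CARD('n) - 1) * N x) * (\<phi> x)^2 * (pd k \<psi> x)^2))
      = \<phi> x * N x * P + \<phi> x * T - (real CARD('n) - 1) * N x * S
        - 2 / ((real CARD('n) - 1) * N x) * (\<phi> x)^2 * Q"
    unfolding P_def S_def T_def Q_def
    by (simp add: sum_subtractf sum.distrib sum_distrib_left sum_divide_distrib algebra_simps)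
  have "real CARD('n) - 1 \<noteq> 0" using n by simp
  then show "N x * ricci (conformal_metric \<epsilon> \<phi>) i i x -
      (hess (conformal_metric \<epsilon> \<phi>) N i i x - 2 * pd i \<psi> x * pd i \<psi> x / N x
      + 2 / ((real CARD('n) - 1) * N x) * gradsq (conformal_metric \<epsilon> \<phi>) \<psi> x * conformal_metric \<epsilon> \<phi> x $ i $ i)
    = 1 / (\<phi> x)^2 * (\<phi> x * ((real CARD('n) - 2) * N x * pd i (pd i \<phi>) x - \<phi> x * pd i (pd i N) x
                 - 2 * pd i \<phi> x * pd i N x + 2 * (\<phi> x / N x) * (pd i \<psi> x)^2)
         + \<epsilon> i * (\<Sum>k\<in>UNIV. \<epsilon> k *
             (\<phi> x * pd k (pd k \<phi>) x * N x + \<phi> x * pd k \<phi> x * pd k N x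
              - (real CARD('n) - 1) * N x * (pd k \<phi> x)^2
              - 2 / ((real CARD('n) - 1) * N x) * (\<phi> x)^2 * (pd k \<psi> x)^2)))"
    unfolding ricci_conformal_metric[OF x] hess_conformal_metric[OF x] conformal_metric_component
      gradsq_conformal_metric[OF x] sum P_def[symmetric] S_def[symmetric] T_def[symmetric] Q_def[symmetric]
    using phi_nonzero[OF x] N by (simp add: field_simps power2_eq_square)
qed

lemma ricci_equation_iff:
  assumes x: "x \<in> \<Omega>" and N: "N x \<noteq> 0" and n: "CARD('n) \<ge> 2"
  shows "N x * ricci (conformal_metric \<epsilon> \<phi>) i j x =
      hess (conformal_metric \<epsilon> \<phi>) N i j x - 2 * pd i \<psi> x * pd j \<psi> x / N x
      + 2 / ((real CARD('n) - 1) * N x) * gradsq (conformal_metric \<epsilon> \<phi>) \<psi> x * conformal_metric \<epsilon> \<phi> x $ i $ j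
    \<longleftrightarrow> (if i = j then
         \<phi> x * ((real CARD('n) - 2) * N x * pd i (pd i \<phi>) x - \<phi> x * pd i (pd i N) x
                 - 2 * pd i \<phi> x * pd i N x + 2 * (\<phi> x / N x) * (pd i \<psi> x)^2)
         + \<epsilon> i * (\<Sum>k\<in>UNIV. \<epsilon> k *
             (\<phi> x * pd k (pd k \<phi>) x * N x + \<phi> x * pd k \<phi> x * pd k N x
              - (real CARD('n) - 1) * N x * (pd k \<phi> x)^2
              - 2 / ((real CARD('n) - 1) * N x) * (\<phi> x)^2 * (pd k \<psi> x)^2)) = 0
       else
         (real CARD('n) - 2) * N x * pd i (pd j \<phi>) x - \<phi> x * pd i (pd j N) x
         - pd i \<phi> x * pd j N x - pd j \<phi> x * pd i N x
         + 2 * (\<phi> x / N x) * pd i \<psi> x * pd j \<psi> x = 0)"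
proof (cases "i = j")
  case True
  then show ?thesis
    using ricci_equation_diagonal_iff[where N = N and \<psi> = \<psi>, OF x N n, of j] by (simp only: simp_thms if_True if_False)
next
  case False
  then show ?thesis
    using ricci_equation_off_diagonal_iff[where N = N and \<psi> = \<psi>, OF x N False] by (simp only: simp_thms if_True if_False)
qed

end

theorem theorem1p1:
  fixes \<Omega> :: "(real^'n::finite) set"
    and \<epsilon> :: "'n \<Rightarrow> real"
    and \<phi> N \<psi> :: "real^'n \<Rightarrow> real"
  assumes n3: "CARD('n) \<ge> 3"
    and eps: "\<forall>i. \<epsilon> i = 1 \<or> \<epsilon> i = -1"
    and op: "open \<Omega>"
    and phi_pos: "\<forall>x\<in>\<Omega>. \<phi> x > 0"
    and N_pos: "\<forall>x\<in>\<Omega>. N x > 0"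
    and sm: "smooth_on \<Omega> \<phi>" "smooth_on \<Omega> N" "smooth_on \<Omega> \<psi>"
  shows "electrostatic \<Omega> (\<lambda>x. (1 / (\<phi> x)^2) *\<^sub>R pseudo_euclidean \<epsilon>) N \<psi> \<longleftrightarrow>
    (\<forall>x\<in>\<Omega>.
      (\<forall>i j. i \<noteq> j \<longrightarrow>
         (real CARD('n) - 2) * N x * pd i (pd j \<phi>) x - \<phi> x * pd i (pd j N) x
         - pd i \<phi> x * pd j N x - pd j \<phi> x * pd i N x
         + 2 * (\<phi> x / N x) * pd i \<psi> x * pd j \<psi> x = 0) \<and>
      (\<forall>i.
         \<phi> x * ((real CARD('n) - 2) * N x * pd i (pd i \<phi>) x - \<phi> x * pd i (pd i N) x
                 - 2 * pd i \<phi> x * pd i N x + 2 * (\<phi> x / N x) * (pd i \<psi> x)^2)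
         + \<epsilon> i * (\<Sum>k\<in>UNIV. \<epsilon> k *
             (\<phi> x * pd k (pd k \<phi>) x * N x + \<phi> x * pd k \<phi> x * pd k N x
              - (real CARD('n) - 1) * N x * (pd k \<phi> x)^2
              - 2 / ((real CARD('n) - 1) * N x) * (\<phi> x)^2 * (pd k \<psi> x)^2)) = 0) \<and>
      (\<Sum>k\<in>UNIV. \<epsilon> k * (N x * \<phi> x * pd k (pd k \<psi>) x
           - (real CARD('n) - 2) * N x * pd k \<phi> x * pd k \<psi> x
           - \<phi> x * pd k \<psi> x * pd k N x)) = 0 \<and>
      (\<Sum>k\<in>UNIV. \<epsilon> k * (\<phi> x * N x * pd k (pd k N) x
           - (real CARD('n) - 2) * N x * pd k \<phi> x * pd k N x
           - Chat2 CARD('n) * \<phi> x * (pd k \<psi> x)^2)) = 0)"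
proof -
  interpret conformally_flat \<epsilon> \<phi> \<Omega>
    using eps op phi_pos sm(1) by unfold_locales
  have metric: "(\<lambda>x. (1 / (\<phi> x)^2) *\<^sub>R pseudo_euclidean \<epsilon>) = conformal_metric \<epsilon> \<phi>"
    by (simp add: fun_eq_iff conformal_metric_def)
  have N: "\<forall>x\<in>\<Omega>. N x \<noteq> 0" using N_pos by force
  have n: "CARD('n) \<ge> 2" using n3 by simp
  show ?thesis
    unfolding electrostatic_def metric
    by (simp only: n3 semi_riemannian sm N_pos[THEN eqTrueI] simp_thms, intro ball_cong refl,
        simp only: laplacian_equation_iff divergence_equation_iff ricci_equation_iff all_pairs_if_iff
          N[rule_format] N[THEN eqTrueI] sm n simp_thms conj_ac)
qed

end
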